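(* Let $R$ be a commutative noetherian domain, $\sigma\in\operatorname{Aut}_\Bbbk(R)$, $H,J$ ideals of $R$, and $B=R(t,\sigma,H,J)$. Suppose that $\sigma^n(\mathfrak p)\neq\mathfrak p$ for every maximal ideal $\mathfrak p$ of $R$ and every integer $n\neq0$. Then every two-sided ideal of $B$ is graded (i.e. generated by homogeneous elements for the $\mathbb Z$-grading $B=\bigoplus_n I^{(n)}t^n$).
   Context: $\Bbbk$ is a field; all algebras are associative unital $\Bbbk$-algebras. For an algebra $R$ and $\sigma\in\operatorname{Aut}_\Bbbk(R)$, $R[t,t^{-1};\sigma]$ is the skew Laurent ring: generated over $R$ by $t,t^{-1}$ with $tt^{-1}=t^{-1}t=1$ and $t^{\pm1}r=\sigma^{\pm1}(r)t^{\pm1}$ for $r\in R$. Given two-sided ideals $H,J$ of $R$, set $I^{(0)}=R$, $I^{(n)}=J\sigma(J)\cdots\sigma^{n-1}(J)$ for $n\ge1$, and $I^{(n)}=\sigma^{-1}(H)\sigma^{-2}(H)\cdots\sigma^{n}(H)$ for $n\le-1$; it is assumed throughout that $I^{(n)}\neq0$ for all $n\in\mathbb Z$. The Bell–Rogalski (BR) algebra is $R(t,\sigma,H,J)=\bigoplus_{n\in\mathbb Z}I^{(n)}t^n\subseteq R[t,t^{-1};\sigma]$. *)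

theory Defs
  imports Main
begin

section \<open>Commutative ring notions (R is the whole type 'a)\<close>

definition is_ideal :: "'a::comm_ring_1 set \<Rightarrow> bool" where
  "is_ideal I \<longleftrightarrow> 0 \<in> I \<and> (\<forall>x\<in>I. \<forall>y\<in>I. x + y \<in> I \<and> x - y \<in> I)
      \<and> (\<forall>r x. x \<in> I \<longrightarrow> r * x \<in> I)"

definition maximal_ideal :: "'a::comm_ring_1 set \<Rightarrow> bool" where
  "maximal_ideal P \<longleftrightarrow> is_ideal P \<and> P \<noteq> UNIV \<and>
      (\<forall>Q. is_ideal Q \<and> P \<subseteq> Q \<longrightarrow> Q = P \<or> Q = UNIV)"

definition noetherian :: "'a::comm_ring_1 itself \<Rightarrow> bool" where
  "noetherian _ \<longleftrightarrow> (\<forall>C :: nat \<Rightarrow> 'a set. (\<forall>i. is_ideal (C i)) \<and> (\<forall>i. C i \<subseteq> C (Suc i))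
      \<longrightarrow> (\<exists>N. \<forall>m\<ge>N. C m = C N))"

text \<open>R is a k-algebra via the structure map emb : k -> R (a unital ring homomorphism);
  sigma is a k-algebra automorphism of R.\<close>
definition ring_hom_fun :: "('k::ring_1 \<Rightarrow> 'a::ring_1) \<Rightarrow> bool" where
  "ring_hom_fun f \<longleftrightarrow> f 1 = 1 \<and> (\<forall>x y. f (x + y) = f x + f y) \<and> (\<forall>x y. f (x * y) = f x * f y)"

definition k_alg_aut :: "('k::field \<Rightarrow> 'a::comm_ring_1) \<Rightarrow> ('a \<Rightarrow> 'a) \<Rightarrow> bool" where
  "k_alg_aut emb \<sigma> \<longleftrightarrow> bij \<sigma> \<and> ring_hom_fun \<sigma> \<and> (\<forall>c. \<sigma> (emb c) = emb c)"

definition zpow :: "('a \<Rightarrow> 'a) \<Rightarrow> int \<Rightarrow> 'a \<Rightarrow> 'a" where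
  "zpow \<sigma> n = (if 0 \<le> n then \<sigma> ^^ nat n else inv \<sigma> ^^ nat (- n))"

inductive_set ideal_mult :: "'a::comm_ring_1 set \<Rightarrow> 'a set \<Rightarrow> 'a set" for A B where
  zero: "0 \<in> ideal_mult A B"
| step: "a \<in> A \<Longrightarrow> b \<in> B \<Longrightarrow> x \<in> ideal_mult A B \<Longrightarrow> a * b + x \<in> ideal_mult A B"

fun posI :: "('a::comm_ring_1 \<Rightarrow> 'a) \<Rightarrow> 'a set \<Rightarrow> nat \<Rightarrow> 'a set" where
  "posI \<sigma> J 0 = UNIV"
| "posI \<sigma> J (Suc m) = ideal_mult (posI \<sigma> J m) (zpow \<sigma> (int m) ` J)"

fun negI :: "('a::comm_ring_1 \<Rightarrow> 'a) \<Rightarrow> 'a set \<Rightarrow> nat \<Rightarrow> 'a set" where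
  "negI \<sigma> H 0 = UNIV"
| "negI \<sigma> H (Suc m) = ideal_mult (negI \<sigma> H m) (zpow \<sigma> (- int (Suc m)) ` H)"

definition Iseq :: "('a::comm_ring_1 \<Rightarrow> 'a) \<Rightarrow> 'a set \<Rightarrow> 'a set \<Rightarrow> int \<Rightarrow> 'a set" where
  "Iseq \<sigma> H J n = (if 0 \<le> n then posI \<sigma> J (nat n) else negI \<sigma> H (nat (- n)))"

text \<open>An element sum_n f(n) t^n is represented by its coefficient function f : int -> R
  with finite support.\<close>
definition supp :: "(int \<Rightarrow> 'a::zero) \<Rightarrow> int set" where
  "supp f = {n. f n \<noteq> 0}"

definition skew_laurent :: "(int \<Rightarrow> 'a::comm_ring_1) set" where
  "skew_laurent = {f. finite (supp f)}"

text \<open>(a t^m)(b t^n) = a sigma^m(b) t^(m+n).\<close>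
definition skmult :: "('a::comm_ring_1 \<Rightarrow> 'a) \<Rightarrow> (int \<Rightarrow> 'a) \<Rightarrow> (int \<Rightarrow> 'a) \<Rightarrow> int \<Rightarrow> 'a" where
  "skmult \<sigma> f g = (\<lambda>k. \<Sum>m\<in>supp f. f m * zpow \<sigma> m (g (k - m)))"

definition BR_alg :: "('a::comm_ring_1 \<Rightarrow> 'a) \<Rightarrow> 'a set \<Rightarrow> 'a set \<Rightarrow> (int \<Rightarrow> 'a) set" where
  "BR_alg \<sigma> H J = {f. finite (supp f) \<and> (\<forall>n. f n \<in> Iseq \<sigma> H J n)}"

definition two_sided_ideal :: "('a::comm_ring_1 \<Rightarrow> 'a) \<Rightarrow> (int \<Rightarrow> 'a) set \<Rightarrow> (int \<Rightarrow> 'a) set \<Rightarrow> bool" where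
  "two_sided_ideal \<sigma> B I \<longleftrightarrow> I \<subseteq> B \<and> (\<lambda>_. 0) \<in> I \<and>
     (\<forall>x\<in>I. \<forall>y\<in>I. (\<lambda>n. x n + y n) \<in> I \<and> (\<lambda>n. x n - y n) \<in> I) \<and>
     (\<forall>b\<in>B. \<forall>x\<in>I. skmult \<sigma> b x \<in> I \<and> skmult \<sigma> x b \<in> I)"

definition gen_two_sided_ideal ::
    "('a::comm_ring_1 \<Rightarrow> 'a) \<Rightarrow> (int \<Rightarrow> 'a) set \<Rightarrow> (int \<Rightarrow> 'a) set \<Rightarrow> (int \<Rightarrow> 'a) set" where
  "gen_two_sided_ideal \<sigma> B S = \<Inter>{I. two_sided_ideal \<sigma> B I \<and> S \<subseteq> I}"

definition homogeneous :: "(int \<Rightarrow> 'a::zero) \<Rightarrow> bool" where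
  "homogeneous f \<longleftrightarrow> (\<exists>n. supp f \<subseteq> {n})"

definition graded_ideal :: "('a::comm_ring_1 \<Rightarrow> 'a) \<Rightarrow> (int \<Rightarrow> 'a) set \<Rightarrow> (int \<Rightarrow> 'a) set \<Rightarrow> bool" where
  "graded_ideal \<sigma> B I \<longleftrightarrow> I = gen_two_sided_ideal \<sigma> B {f \<in> I. homogeneous f}"

end

theory Submission
  imports Defs
begin

text \<open>
  Let \<open>x = \<Sum> x\<^sub>k t\<^sup>k\<close> lie in a two-sided ideal \<open>I\<close> of \<open>B\<close> and let \<open>a \<noteq> n\<close> be two degrees in
  its support. For \<open>r \<in> R\<close> the element \<open>x r - \<sigma>\<^sup>a(r) x = \<Sum> x\<^sub>k (\<sigma>\<^sup>k(r) - \<sigma>\<^sup>a(r)) t\<^sup>k\<close> of \<open>I\<close>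
  has smaller support, so by induction on the size of the support \<open>I\<close> contains
  \<open>x\<^sub>n (\<sigma>\<^sup>n(r) - \<sigma>\<^sup>a(r)) t\<^sup>n\<close> for all \<open>r\<close>. Hence the ideal \<open>Q = {c. c x\<^sub>n t\<^sup>n \<in> I}\<close> of \<open>R\<close>
  contains every \<open>\<sigma>\<^sup>n(r) - \<sigma>\<^sup>a(r)\<close>. If \<open>Q\<close> were proper it would lie in a maximal ideal \<open>P\<close>
  with \<open>u - \<sigma>\<^sup>n\<^sup>-\<^sup>a(u) \<in> P\<close> for all \<open>u\<close>, forcing \<open>\<sigma>\<^sup>n\<^sup>-\<^sup>a(P) = P\<close>. So \<open>1 \<in> Q\<close>, i.e. every
  homogeneous component of \<open>x\<close> lies in \<open>I\<close>, and \<open>I\<close> is generated by them.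
\<close>

lemma zpow_0: "zpow \<sigma> 0 = id"
  by (simp add: zpow_def)

lemma zpow_succ:
  assumes "bij \<sigma>"
  shows "zpow \<sigma> (n + 1) x = \<sigma> (zpow \<sigma> n x)"
proof (cases "0 \<le> n")
  case True
  then have "nat (n + 1) = Suc (nat n)" by simp
  then show ?thesis using True by (simp add: zpow_def)
next
  case False
  then have "nat (- n) = Suc (nat (- (n + 1)))" by simp
  then have "zpow \<sigma> n x = inv \<sigma> (zpow \<sigma> (n + 1) x)"
    using False by (cases "n + 1 = 0") (auto simp: zpow_def)
  then show ?thesis using assms by (simp add: bij_is_surj surj_f_inv_f)
qed

lemma zpow_pred:
  assumes "bij \<sigma>"
  shows "zpow \<sigma> (n - 1) x = inv \<sigma> (zpow \<sigma> n x)"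
  using zpow_succ[OF assms, of "n - 1"] assms by (simp add: bij_is_inj inv_f_f)

lemma zpow_add:
  assumes "bij \<sigma>"
  shows "zpow \<sigma> (m + n) x = zpow \<sigma> m (zpow \<sigma> n x)"
proof (induction m rule: int_induct[where k = 0])
  case base
  then show ?case by (simp add: zpow_0)
next
  case (step1 i)
  have "zpow \<sigma> (i + 1 + n) x = \<sigma> (zpow \<sigma> (i + n) x)"
    using zpow_succ[OF assms, of "i + n"] by (simp add: algebra_simps)
  then show ?case using step1 by (simp add: zpow_succ[OF assms])
next
  case (step2 i)
  have "zpow \<sigma> (i - 1 + n) x = inv \<sigma> (zpow \<sigma> (i + n) x)"
    using zpow_pred[OF assms, of "i + n"] by (simp add: algebra_simps)
  then show ?case using step2 by (simp add: zpow_pred[OF assms])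
qed

lemma zpow_neg_inverse:
  assumes "bij \<sigma>"
  shows "zpow \<sigma> n (zpow \<sigma> (- n) x) = x"
  using zpow_add[OF assms, of n "- n" x] by (simp add: zpow_0)

lemma zpow_fixed_point:
  assumes "bij \<sigma>" and "\<sigma> x = x"
  shows "zpow \<sigma> m x = x"
proof (induction m rule: int_induct[where k = 0])
  case base
  then show ?case by (simp add: zpow_0)
next
  case (step1 i)
  then show ?case by (simp add: zpow_succ[OF assms(1)] assms(2))
next
  case (step2 i)
  have "inv \<sigma> x = x" using assms by (metis bij_is_inj inv_f_f)
  then show ?case using step2 by (simp add: zpow_pred[OF assms(1)])
qed

lemma ring_hom_fun_0:
  assumes "ring_hom_fun f"
  shows "f 0 = 0"
proof -
  have "f 0 + 0 = f 0 + f 0"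
    using assms unfolding ring_hom_fun_def by (metis add_0_right)
  then show ?thesis by (rule add_left_imp_eq[symmetric])
qed

lemma noetherian_exists_maximal_ideal:
  fixes Q :: "'a::comm_ring_1 set"
  assumes noeth: "noetherian TYPE('a)" and Q: "is_ideal Q" "Q \<noteq> UNIV"
  shows "\<exists>P. maximal_ideal P \<and> Q \<subseteq> P"
proof (rule ccontr)
  assume no_max: "\<nexists>P. maximal_ideal P \<and> Q \<subseteq> P"
  define proper_above where "proper_above P \<longleftrightarrow> is_ideal P \<and> P \<noteq> UNIV \<and> Q \<subseteq> P" for P
  define enlarge where
    "enlarge P = (SOME P'. is_ideal P' \<and> P \<subseteq> P' \<and> P' \<noteq> P \<and> P' \<noteq> UNIV)" for P :: "'a set"
  have enlarge: "proper_above (enlarge P) \<and> P \<subset> enlarge P" if "proper_above P" for P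
  proof -
    have "\<not> maximal_ideal P" using no_max that unfolding proper_above_def by blast
    then have "\<exists>P'. is_ideal P' \<and> P \<subseteq> P' \<and> P' \<noteq> P \<and> P' \<noteq> UNIV"
      using that unfolding maximal_ideal_def proper_above_def by blast
    then have "is_ideal (enlarge P) \<and> P \<subseteq> enlarge P \<and> enlarge P \<noteq> P \<and> enlarge P \<noteq> UNIV"
      unfolding enlarge_def by (rule someI_ex)
    then show ?thesis using that unfolding proper_above_def by blast
  qed
  define C where "C i = (enlarge ^^ i) Q" for i
  have C_proper: "proper_above (C i)" for i
  proof (induction i)
    case 0
    then show ?case using Q by (simp add: C_def proper_above_def)
  next
    case (Suc i)
    then show ?case using enlarge[of "C i"] by (simp add: C_def)
  qed
  have C_strict: "C i \<subset> C (Suc i)" for i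
    using enlarge[OF C_proper] by (simp add: C_def)
  have "\<forall>i. is_ideal (C i)"
    using C_proper unfolding proper_above_def by blast
  moreover have "\<forall>i. C i \<subseteq> C (Suc i)"
    using C_strict by (simp add: psubset_imp_subset)
  ultimately obtain N where "\<forall>m\<ge>N. C m = C N"
    using noeth unfolding noetherian_def by blast
  then have "C (Suc N) = C N" by (meson lessI less_imp_le_nat)
  then show False using C_strict[of N] by simp
qed

lemma ideal_image_eq_if_diff_mem:
  fixes f :: "'a::comm_ring_1 \<Rightarrow> 'a"
  assumes P: "is_ideal P" and "surj f" and diff: "\<And>u. f u - u \<in> P"
  shows "f ` P = P"
proof
  show "f ` P \<subseteq> P"
  proof
    fix y assume "y \<in> f ` P"
    then obtain p where p: "p \<in> P" "y = f p" by blast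
    have "(f p - p) + p \<in> P" using P diff p(1) unfolding is_ideal_def by blast
    then show "y \<in> P" using p by simp
  qed
next
  show "P \<subseteq> f ` P"
  proof
    fix p assume p: "p \<in> P"
    obtain q where q: "p = f q" using \<open>surj f\<close> by blast
    have "p - (f q - q) \<in> P" using P diff p unfolding is_ideal_def by blast
    then have "q \<in> P" using q by simp
    then show "p \<in> f ` P" using q by blast
  qed
qed

lemma ideal_eq_UNIV_if_zpow_diff_mem:
  fixes \<sigma> :: "'a::comm_ring_1 \<Rightarrow> 'a"
  assumes noeth: "noetherian TYPE('a)" and "bij \<sigma>"
    and no_fixed_max: "\<forall>P n. maximal_ideal P \<and> n \<noteq> 0 \<longrightarrow> zpow \<sigma> n ` P \<noteq> P"
    and Q: "is_ideal Q" and "a \<noteq> c" and diff: "\<forall>r. zpow \<sigma> c r - zpow \<sigma> a r \<in> Q"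
  shows "Q = UNIV"
proof (rule ccontr)
  assume "Q \<noteq> UNIV"
  then obtain P where P: "maximal_ideal P" "Q \<subseteq> P"
    using noetherian_exists_maximal_ideal[OF noeth Q] by blast
  define d where "d = c - a"
  have "is_ideal P" using P(1) unfolding maximal_ideal_def by blast
  moreover have "surj (zpow \<sigma> d)"
    by (rule surjI[of _ "zpow \<sigma> (- d)"]) (rule zpow_neg_inverse[OF \<open>bij \<sigma>\<close>])
  moreover have "zpow \<sigma> d u - u \<in> P" for u
  proof -
    have "zpow \<sigma> c (zpow \<sigma> (- a) u) - zpow \<sigma> a (zpow \<sigma> (- a) u) \<in> P"
      using diff P(2) by blast
    moreover have "zpow \<sigma> c (zpow \<sigma> (- a) u) = zpow \<sigma> d u"
      using zpow_add[OF \<open>bij \<sigma>\<close>, of c "- a" u] by (simp add: d_def)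
    ultimately show ?thesis by (simp add: zpow_neg_inverse[OF \<open>bij \<sigma>\<close>])
  qed
  ultimately have "zpow \<sigma> d ` P = P" by (rule ideal_image_eq_if_diff_mem)
  moreover have "d \<noteq> 0" using \<open>a \<noteq> c\<close> by (simp add: d_def)
  ultimately show False using no_fixed_max P(1) by blast
qed

definition monom :: "'a::zero \<Rightarrow> int \<Rightarrow> int \<Rightarrow> 'a" where
  "monom c n = (\<lambda>k. if k = n then c else 0)"

lemma supp_monom: "supp (monom c n) \<subseteq> {n}"
  by (auto simp: supp_def monom_def)

lemma homogeneous_monom: "homogeneous (monom c n)"
  unfolding homogeneous_def using supp_monom by blast

lemma monom_zero: "monom 0 n = (\<lambda>_. 0)"
  by (simp add: monom_def)

lemma zero_mem_Iseq: "0 \<in> Iseq \<sigma> H J n"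
proof -
  have "0 \<in> posI \<sigma> J m" "0 \<in> negI \<sigma> H m" for m
    by (cases m; auto intro: ideal_mult.zero)+
  then show ?thesis by (simp add: Iseq_def)
qed

lemma monom_in_BR_alg: "c \<in> Iseq \<sigma> H J n \<Longrightarrow> monom c n \<in> BR_alg \<sigma> H J"
  unfolding BR_alg_def using supp_monom[of c n] zero_mem_Iseq
  by (auto simp: monom_def intro: finite_subset)

lemma monom_degree_0_in_BR_alg: "monom r 0 \<in> BR_alg \<sigma> H J"
  by (rule monom_in_BR_alg) (simp add: Iseq_def)

lemma skmult_monom_degree_0_left: "skmult \<sigma> (monom s 0) g = (\<lambda>k. s * g k)"
proof (cases "s = 0")
  case True
  then have "supp (monom s 0) = {}" by (auto simp: supp_def monom_def)
  then show ?thesis using True by (simp add: skmult_def)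
next
  case False
  then have "supp (monom s 0) = {0}" by (auto simp: supp_def monom_def)
  then show ?thesis by (simp add: skmult_def zpow_0 monom_def)
qed

lemma skmult_monom_degree_0_right:
  assumes "finite (supp x)" and "bij \<sigma>" and "\<sigma> 0 = 0"
  shows "skmult \<sigma> x (monom r 0) = (\<lambda>k. x k * zpow \<sigma> k r)"
proof
  fix k
  have "skmult \<sigma> x (monom r 0) k = (\<Sum>m\<in>supp x. if m = k then x k * zpow \<sigma> k r else 0)"
    unfolding skmult_def
    by (rule sum.cong) (auto simp: monom_def zpow_fixed_point[OF assms(2,3)])
  also have "\<dots> = x k * zpow \<sigma> k r"
    using assms(1) by (simp add: supp_def)
  finally show "skmult \<sigma> x (monom r 0) k = x k * zpow \<sigma> k r" .
qed

lemma two_sided_idealD: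
  assumes "two_sided_ideal \<sigma> B I"
  shows "I \<subseteq> B" and "(\<lambda>_. 0) \<in> I"
    and "x \<in> I \<Longrightarrow> y \<in> I \<Longrightarrow> (\<lambda>n. x n + y n) \<in> I"
    and "x \<in> I \<Longrightarrow> y \<in> I \<Longrightarrow> (\<lambda>n. x n - y n) \<in> I"
    and "b \<in> B \<Longrightarrow> x \<in> I \<Longrightarrow> skmult \<sigma> b x \<in> I"
    and "b \<in> B \<Longrightarrow> x \<in> I \<Longrightarrow> skmult \<sigma> x b \<in> I"
  using assms unfolding two_sided_ideal_def by blast+

lemma BR_alg_finite_supp: "x \<in> BR_alg \<sigma> H J \<Longrightarrow> finite (supp x)"
  by (simp add: BR_alg_def)

lemma two_sided_ideal_twisted_commutator_mem:
  assumes I: "two_sided_ideal \<sigma> (BR_alg \<sigma> H J) I" and "bij \<sigma>" "\<sigma> 0 = 0" and "x \<in> I"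
  shows "(\<lambda>k. x k * (zpow \<sigma> k r - zpow \<sigma> a r)) \<in> I"
proof -
  have "finite (supp x)"
    using two_sided_idealD(1)[OF I] \<open>x \<in> I\<close> BR_alg_finite_supp by blast
  have "(\<lambda>k. skmult \<sigma> x (monom r 0) k - skmult \<sigma> (monom (zpow \<sigma> a r) 0) x k) \<in> I"
    using two_sided_idealD(4-6)[OF I] monom_degree_0_in_BR_alg \<open>x \<in> I\<close> by blast
  then show ?thesis
    unfolding skmult_monom_degree_0_right[OF \<open>finite (supp x)\<close> assms(2,3)]
      skmult_monom_degree_0_left
    by (simp add: algebra_simps)
qed

lemma two_sided_ideal_coeff_multiples_is_ideal:
  assumes I: "two_sided_ideal \<sigma> (BR_alg \<sigma> H J) I"
  shows "is_ideal {c. monom (c * y) n \<in> I}"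
proof -
  have "monom ((c + d) * y) n = (\<lambda>k. monom (c * y) n k + monom (d * y) n k)"
    and "monom ((c - d) * y) n = (\<lambda>k. monom (c * y) n k - monom (d * y) n k)"
    for c d by (auto simp: monom_def algebra_simps)
  moreover have "monom ((r * c) * y) n = skmult \<sigma> (monom r 0) (monom (c * y) n)" for c r
    unfolding skmult_monom_degree_0_left by (auto simp: monom_def)
  ultimately show ?thesis
    using two_sided_idealD[OF I] monom_degree_0_in_BR_alg[of _ \<sigma> H J]
    unfolding is_ideal_def by (auto simp: monom_zero)
qed

lemma two_sided_ideal_monom_coeff_mem:
  assumes I: "two_sided_ideal \<sigma> (BR_alg \<sigma> H J) I" and "bij \<sigma>" "\<sigma> 0 = 0"
    and zpow_diff: "\<And>Q a c. is_ideal Q \<Longrightarrow> a \<noteq> c \<Longrightarrow> (\<forall>r. zpow \<sigma> c r - zpow \<sigma> a r \<in> Q) \<Longrightarrow> Q = UNIV"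
  shows "x \<in> I \<Longrightarrow> monom (x n) n \<in> I"
proof (induction "card (supp x)" arbitrary: x n rule: less_induct)
  case less
  have fin: "finite (supp x)"
    using two_sided_idealD(1)[OF I] less.prems BR_alg_finite_supp by blast
  consider "x n = 0" | "supp x = {n}" | a where "a \<in> supp x" "a \<noteq> n"
    by (auto simp: supp_def)
  then show ?case
  proof cases
    case 1
    then show ?thesis using two_sided_idealD(2)[OF I] by (simp add: monom_zero)
  next
    case 2
    then have "monom (x n) n k = x k" for k
      by (cases "k = n") (auto simp: monom_def supp_def)
    then have "monom (x n) n = x" by blast
    then show ?thesis using less.prems by simp
  next
    case 3
    have "monom (x n * (zpow \<sigma> n r - zpow \<sigma> a r)) n \<in> I" for r
    proof -
      define y where "y k = x k * (zpow \<sigma> k r - zpow \<sigma> a r)" for k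
      have "y \<in> I"
        unfolding y_def by (rule two_sided_ideal_twisted_commutator_mem[OF I assms(2,3) less.prems])
      moreover have "supp y \<subseteq> supp x - {a}" by (auto simp: supp_def y_def)
      then have "supp y \<subset> supp x" using 3(1) by blast
      then have "card (supp y) < card (supp x)" by (rule psubset_card_mono[OF fin])
      ultimately have "monom (y n) n \<in> I" using less.hyps by blast
      then show ?thesis by (simp add: y_def)
    qed
    then have "\<forall>r. zpow \<sigma> n r - zpow \<sigma> a r \<in> {c. monom (c * x n) n \<in> I}"
      by (simp add: mult.commute)
    then have "{c. monom (c * x n) n \<in> I} = UNIV"
      using zpow_diff[OF two_sided_ideal_coeff_multiples_is_ideal[OF I]] 3(2) by blast
    then show ?thesis by (metis UNIV_I mem_Collect_eq mult_1)
  qed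
qed

lemma two_sided_ideal_sum_mem:
  assumes I: "two_sided_ideal \<sigma> B I" and "finite F" and "\<And>n. n \<in> F \<Longrightarrow> f n \<in> I"
  shows "(\<lambda>k. \<Sum>n\<in>F. f n k) \<in> I"
  using assms(2,3) by (induction F rule: finite_induct) (auto simp: two_sided_idealD[OF I])

lemma sum_monom_coeffs:
  assumes "finite (supp x)"
  shows "(\<lambda>k. \<Sum>n\<in>supp x. monom (x n) n k) = x"
proof
  fix k
  have "(\<Sum>n\<in>supp x. monom (x n) n k) = (\<Sum>n\<in>supp x. if n = k then x k else 0)"
    by (rule sum.cong) (auto simp: monom_def)
  then show "(\<Sum>n\<in>supp x. monom (x n) n k) = x k"
    using assms by (simp add: supp_def)
qed

lemma graded_ideal_if_monom_coeff_mem: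
  assumes I: "two_sided_ideal \<sigma> B I" and B_fin: "\<And>x. x \<in> B \<Longrightarrow> finite (supp x)"
    and comp: "\<And>x n. x \<in> I \<Longrightarrow> monom (x n) n \<in> I"
  shows "graded_ideal \<sigma> B I"
  unfolding graded_ideal_def gen_two_sided_ideal_def
proof (intro equalityI Inter_greatest)
  fix I' assume "I' \<in> {I'. two_sided_ideal \<sigma> B I' \<and> {f \<in> I. homogeneous f} \<subseteq> I'}"
  then have I': "two_sided_ideal \<sigma> B I'" and gens: "{f \<in> I. homogeneous f} \<subseteq> I'" by auto
  show "I \<subseteq> I'"
  proof
    fix x assume "x \<in> I"
    then have "finite (supp x)" using B_fin two_sided_idealD(1)[OF I] by blast
    have "monom (x n) n \<in> I'" for n
      using comp[OF \<open>x \<in> I\<close>] homogeneous_monom gens by blast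
    then have "(\<lambda>k. \<Sum>n\<in>supp x. monom (x n) n k) \<in> I'"
      by (rule two_sided_ideal_sum_mem[OF I' \<open>finite (supp x)\<close>])
    then show "x \<in> I'" by (simp add: sum_monom_coeffs[OF \<open>finite (supp x)\<close>])
  qed
qed (use I in blast)

theorem proposition2p2:
  fixes emb :: "'k::field \<Rightarrow> 'a::idom"
    and \<sigma> :: "'a \<Rightarrow> 'a"
    and H J :: "'a set"
  assumes "ring_hom_fun emb"
    and "noetherian TYPE('a)"
    and "k_alg_aut emb \<sigma>"
    and "is_ideal H" and "is_ideal J"
    and "\<forall>n. Iseq \<sigma> H J n \<noteq> {0}"
    and "\<forall>P n. maximal_ideal P \<and> n \<noteq> 0 \<longrightarrow> zpow \<sigma> n ` P \<noteq> P"
  shows "\<forall>I. two_sided_ideal \<sigma> (BR_alg \<sigma> H J) I \<longrightarrow> graded_ideal \<sigma> (BR_alg \<sigma> H J) I"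
proof (intro allI impI)
  fix I assume I: "two_sided_ideal \<sigma> (BR_alg \<sigma> H J) I"
  have "bij \<sigma>" and "\<sigma> 0 = 0"
    using assms(3) ring_hom_fun_0 by (auto simp: k_alg_aut_def)
  have "monom (x n) n \<in> I" if "x \<in> I" for x n
    using two_sided_ideal_monom_coeff_mem[OF I \<open>bij \<sigma>\<close> \<open>\<sigma> 0 = 0\<close>
        ideal_eq_UNIV_if_zpow_diff_mem[OF assms(2) \<open>bij \<sigma>\<close> assms(7)] that] .
  then show "graded_ideal \<sigma> (BR_alg \<sigma> H J) I"
    using graded_ideal_if_monom_coeff_mem[OF I BR_alg_finite_supp[of _ \<sigma> H J]] by blast
qed

end
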